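(* For each $a\in I$ let $P_a$ be a bottom set of $(X_a,\prec_a)$, and let $\mathbb{A}=(P,A,\prec)$, with $P=\dot\bigcup_a P_a$, be an alignment of the family $\{(P_a,\prec_a|_{P_a})\}_{a\in I}$ having at least one column. Let $\Xi$ be any column of $\mathbb{A}$ that is maximal with respect to $\prec$ (such a column exists). Then: (1) for each $a\in I$, either $\Xi\cap P_a=\emptyset$ (a gap in row $a$), in which case set $P'_a=P_a$, or $\Xi\cap P_a=\{p_a\}$ with $p_a\in\sup P_a$, in which case set $P'_a=P_a\setminus\{p_a\}$; and $\Xi$ is not entirely gaps, i.e., $\Xi\cap P_a\neq\emptyset$ for some $a$; (2) each $P'_a$ is a bottom set of $(X_a,\prec_a)$, and the restriction $\mathbb{A}'$ of $\mathbb{A}$ to $P\setminus\Xi=\dot\bigcup_a P'_a$ (induced subgraph, with columns the remaining columns of $\mathbb{A}$ and the restricted order) is an alignment of $\{(P'_a,\prec_a|_{P'_a})\}_{a\in I}$, so that $\mathbb{A}$ is obtained from $\mathbb{A}'$ by appending the column $\Xi$; (3) every column $\Upsilon$ of $\mathbb{A}'$ satisfies either $\Upsilon\prec\Xi$ or $\Upsilon$ and $\Xi$ are incomparable.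
   Context: Let $I$ be a finite index set ("rows"), and for each $a\in I$ let $(X_a,\prec_a)$ be a finite set with a strict partial order. A subset $P\subseteq X_a$ is a bottom set if for all $p\in P$ and all $p'\prec_a p$ we have $p'\in P$. For a bottom set $P$, $\sup P$ denotes the set of its maximal elements, i.e., $p\in P$ such that there is no $p'\in P$ with $p\prec_a p'$. Given a family of finite strict posets $(Y_a,\prec_a)$, $a\in I$, with elements written $(a,i)$ and $Y=\dot\bigcup_a Y_a$, and a simple undirected graph $(Y,A)$ with set of connected components ("columns") $\mathcal{C}(Y,A)$, an alignment of the family is a triple $(Y,A,\prec)$ where $\prec$ is a strict partial order on $\mathcal{C}(Y,A)$ such that: (P1) every column induces a complete subgraph; (P2) if $(a,i)\in Q$ and $(a,j)\in Q$ then $i=j$; (P3) if $(a,i)\in P$, $(a,j)\in Q$ and $(a,i)\prec_a(a,j)$ then $P\prec Q$; (P4) if $P\prec Q$, $(a,i)\in P$ and $(a,j)\in Q$, then $(a,i)\prec_a(a,j)$ or $(a,i)$ and $(a,j)$ are incomparable w.r.t. $\prec_a$. *)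

theory Defs
  imports Main
begin

definition strict_po_on :: "'a set \<Rightarrow> ('a \<Rightarrow> 'a \<Rightarrow> bool) \<Rightarrow> bool" where
  "strict_po_on S r \<longleftrightarrow>
     (\<forall>x\<in>S. \<not> r x x) \<and> (\<forall>x\<in>S. \<forall>y\<in>S. \<forall>z\<in>S. r x y \<longrightarrow> r y z \<longrightarrow> r x z)"

definition bottom_set :: "'a set \<Rightarrow> ('a \<Rightarrow> 'a \<Rightarrow> bool) \<Rightarrow> 'a set \<Rightarrow> bool" where
  "bottom_set X r P \<longleftrightarrow> P \<subseteq> X \<and> (\<forall>p\<in>P. \<forall>p'\<in>X. r p' p \<longrightarrow> p' \<in> P)"

definition sup_set :: "('a \<Rightarrow> 'a \<Rightarrow> bool) \<Rightarrow> 'a set \<Rightarrow> 'a set" where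
  "sup_set r P = {p \<in> P. \<not> (\<exists>p'\<in>P. r p p')}"

definition simple_graph :: "'v set \<Rightarrow> ('v \<Rightarrow> 'v \<Rightarrow> bool) \<Rightarrow> bool" where
  "simple_graph V E \<longleftrightarrow> (\<forall>u v. E u v \<longrightarrow> u \<in> V \<and> v \<in> V \<and> E v u \<and> u \<noteq> v)"

text \<open>Connected components (columns) of the graph (V, E).\<close>
definition components :: "'v set \<Rightarrow> ('v \<Rightarrow> 'v \<Rightarrow> bool) \<Rightarrow> 'v set set" where
  "components V E =
     (\<lambda>u. {v \<in> V. (\<lambda>x y. E x y \<and> x \<in> V \<and> y \<in> V)\<^sup>*\<^sup>* u v}) ` V"

text \<open>Alignment (Y, A, prec) of the family of strict posets (Y a, lt a), a \<in> I.
  The disjoint union of the Y a is Sigma I Y, elements written (a, i).\<close>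
definition alignment ::
  "'i set \<Rightarrow> ('i \<Rightarrow> 'x set) \<Rightarrow> ('i \<Rightarrow> 'x \<Rightarrow> 'x \<Rightarrow> bool)
   \<Rightarrow> (('i \<times> 'x) \<Rightarrow> ('i \<times> 'x) \<Rightarrow> bool)
   \<Rightarrow> (('i \<times> 'x) set \<Rightarrow> ('i \<times> 'x) set \<Rightarrow> bool) \<Rightarrow> bool" where
  "alignment I Y lt E prec \<longleftrightarrow>
     (let U = Sigma I Y; C = components U E in
      simple_graph U E \<and>
      strict_po_on C prec \<and>
      \<comment> \<open>(P1)\<close>
      (\<forall>Q\<in>C. \<forall>u\<in>Q. \<forall>v\<in>Q. u \<noteq> v \<longrightarrow> E u v) \<and>
      \<comment> \<open>(P2)\<close>
      (\<forall>Q\<in>C. \<forall>a i j. (a, i) \<in> Q \<longrightarrow> (a, j) \<in> Q \<longrightarrow> i = j) \<and>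
      \<comment> \<open>(P3)\<close>
      (\<forall>P\<in>C. \<forall>Q\<in>C. \<forall>a i j. (a, i) \<in> P \<longrightarrow> (a, j) \<in> Q \<longrightarrow> lt a i j \<longrightarrow> prec P Q) \<and>
      \<comment> \<open>(P4)\<close>
      (\<forall>P\<in>C. \<forall>Q\<in>C. \<forall>a i j. prec P Q \<longrightarrow> (a, i) \<in> P \<longrightarrow> (a, j) \<in> Q \<longrightarrow>
          lt a i j \<or> (\<not> lt a i j \<and> \<not> lt a j i)))"

end

theory Submission
  imports Defs
begin

text \<open>A maximal column \<open>\<Xi>\<close> has no column above it, so by (P3) no entry \<open>(a, p)\<close> of \<open>\<Xi>\<close> has a
  successor in its row \<open>P a\<close>: every entry is a maximal element of its row, and deleting it keeps
  the row a bottom set. Since \<open>\<Xi>\<close> is a connected component of the graph, deleting it leaves the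
  other components untouched, and the axioms (P1)--(P4), which only speak about single columns
  and pairs of columns, survive the restriction.\<close>

lemma components_simple_graph:
  assumes "simple_graph V E"
  shows "components V E = (\<lambda>u. {v \<in> V. E\<^sup>*\<^sup>* u v}) ` V"
proof -
  have "(\<lambda>x y. E x y \<and> x \<in> V \<and> y \<in> V) = E"
    using assms by (auto simp: simple_graph_def fun_eq_iff)
  then show ?thesis unfolding components_def by simp
qed

lemma simple_graph_rtranclp_sym:
  assumes "simple_graph V E" "E\<^sup>*\<^sup>* u v"
  shows "E\<^sup>*\<^sup>* v u"
  using assms(2)
proof (induction rule: rtranclp_induct)
  case (step y z)
  then have "E z y" using assms(1) by (auto simp: simple_graph_def)
  then show ?case using step.IH by (rule converse_rtranclp_into_rtranclp)
qed simp

lemma reachable_in_components: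
  assumes "simple_graph V E" "u \<in> V"
  shows "{v \<in> V. E\<^sup>*\<^sup>* u v} \<in> components V E"
  using assms components_simple_graph by fastforce

lemma component_eq_reachable:
  assumes "simple_graph V E" "Q \<in> components V E" "u \<in> Q"
  shows "Q = {v \<in> V. E\<^sup>*\<^sup>* u v}"
proof -
  obtain w where w: "Q = {v \<in> V. E\<^sup>*\<^sup>* w v}"
    using assms(2) unfolding components_simple_graph[OF assms(1)] by (rule imageE)
  then have "E\<^sup>*\<^sup>* w u" using assms(3) by simp
  then have "E\<^sup>*\<^sup>* u w" by (rule simple_graph_rtranclp_sym[OF assms(1)])
  then show ?thesis using w assms(3) by (auto intro: rtranclp_trans)
qed

lemma components_subset: "simple_graph V E \<Longrightarrow> Q \<in> components V E \<Longrightarrow> Q \<subseteq> V"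
  using components_simple_graph by fastforce

lemma components_nonempty: "simple_graph V E \<Longrightarrow> Q \<in> components V E \<Longrightarrow> Q \<noteq> {}"
  using components_simple_graph by fastforce

lemma components_disjoint:
  assumes "simple_graph V E" "Q \<in> components V E" "Q' \<in> components V E" "Q \<noteq> Q'"
  shows "Q \<inter> Q' = {}"
proof -
  have "Q = Q'" if "u \<in> Q" "u \<in> Q'" for u
    using component_eq_reachable[OF assms(1,2) that(1)] component_eq_reachable[OF assms(1,3) that(2)]
    by simp
  then show ?thesis using assms(4) by blast
qed

lemma components_remove_component:
  assumes sg: "simple_graph V E" and \<Xi>: "\<Xi> \<in> components V E"
  defines "E' \<equiv> \<lambda>u v. E u v \<and> u \<notin> \<Xi> \<and> v \<notin> \<Xi>"
  shows "simple_graph (V - \<Xi>) E'" and "components (V - \<Xi>) E' = components V E - {\<Xi>}"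
proof -
  show sg': "simple_graph (V - \<Xi>) E'"
    using sg unfolding simple_graph_def E'_def by blast
  let ?reach = "\<lambda>u. {v \<in> V. E\<^sup>*\<^sup>* u v}"
  have \<Xi>_reach: "\<Xi> = ?reach u" if "u \<in> \<Xi>" for u
    using component_eq_reachable[OF sg \<Xi> that] .
  have outside: "v \<notin> \<Xi>" if "u \<in> V - \<Xi>" "E\<^sup>*\<^sup>* u v" for u v
  proof
    assume "v \<in> \<Xi>"
    moreover have "E\<^sup>*\<^sup>* v u" using that(2) by (rule simple_graph_rtranclp_sym[OF sg])
    ultimately show False using \<Xi>_reach that(1) by blast
  qed
  have reach: "E'\<^sup>*\<^sup>* u v \<longleftrightarrow> E\<^sup>*\<^sup>* u v" if u: "u \<in> V - \<Xi>" for u v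
  proof
    show "E'\<^sup>*\<^sup>* u v \<Longrightarrow> E\<^sup>*\<^sup>* u v"
      by (erule rtranclp_mono[THEN predicate2D, rotated]) (auto simp: E'_def)
  next
    assume "E\<^sup>*\<^sup>* u v"
    then show "E'\<^sup>*\<^sup>* u v"
    proof (induction rule: rtranclp_induct)
      case (step y z)
      have "y \<notin> \<Xi>" "z \<notin> \<Xi>"
        using outside[OF u step(1)] outside[OF u rtranclp.rtrancl_into_rtrancl[OF step(1,2)]] .
      then have "E' y z" using step(2) by (simp add: E'_def)
      with step.IH show ?case by (rule rtranclp.rtrancl_into_rtrancl)
    qed simp
  qed
  have "components (V - \<Xi>) E' = ?reach ` (V - \<Xi>)"
    unfolding components_simple_graph[OF sg'] using reach outside by (intro image_cong) auto
  also have "\<dots> = components V E - {\<Xi>}"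
  proof
    show "?reach ` (V - \<Xi>) \<subseteq> components V E - {\<Xi>}"
      using reachable_in_components[OF sg] \<Xi>_reach by fastforce
    show "components V E - {\<Xi>} \<subseteq> ?reach ` (V - \<Xi>)"
    proof
      fix Q assume Q: "Q \<in> components V E - {\<Xi>}"
      then obtain w where w: "w \<in> V" "Q = ?reach w"
        unfolding components_simple_graph[OF sg] by blast
      then have "w \<notin> \<Xi>" using Q \<Xi>_reach by blast
      with w show "Q \<in> ?reach ` (V - \<Xi>)" by blast
    qed
  qed
  finally show "components (V - \<Xi>) E' = components V E - {\<Xi>}" .
qed

lemma Sigma_diff_subset:
  "\<Xi> \<subseteq> Sigma I P \<Longrightarrow> Sigma I P - \<Xi> = Sigma I (\<lambda>a. P a - {x. (a, x) \<in> \<Xi>})"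
  by auto

lemma strict_po_on_finite_has_maximal:
  assumes "finite C" "C \<noteq> {}" "strict_po_on C r"
  shows "\<exists>x\<in>C. \<not> (\<exists>y\<in>C. r x y)"
proof -
  define R where "R = {(y, x). x \<in> C \<and> y \<in> C \<and> r x y}"
  have "finite R"
    unfolding R_def by (rule finite_subset[of _ "C \<times> C"]) (auto simp: assms(1))
  moreover have "acyclic R"
  proof -
    have "trans R" using assms(3) unfolding R_def strict_po_on_def trans_def by blast
    then have "R\<^sup>+ = R" by (rule trancl_id)
    then show ?thesis unfolding acyclic_def using assms(3) by (simp add: R_def strict_po_on_def)
  qed
  ultimately have "wf R" by (rule finite_acyclic_wf)
  moreover obtain c where "c \<in> C" using assms(2) by blast
  ultimately obtain z where "z \<in> C" "\<And>y. (y, z) \<in> R \<Longrightarrow> y \<notin> C" by (rule wfE_min) (rule that)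
  then show ?thesis unfolding R_def by blast
qed

lemma alignment_simple_graph: "alignment I P lt E prec \<Longrightarrow> simple_graph (Sigma I P) E"
  by (simp add: alignment_def Let_def)

lemma alignment_column_row_unique:
  assumes "alignment I P lt E prec" "Q \<in> components (Sigma I P) E" "(a, i) \<in> Q" "(a, j) \<in> Q"
  shows "i = j"
proof -
  have "\<forall>Q\<in>components (Sigma I P) E. \<forall>a i j. (a, i) \<in> Q \<longrightarrow> (a, j) \<in> Q \<longrightarrow> i = j"
    using assms(1) by (simp add: alignment_def Let_def)
  then show ?thesis using assms(2-) by blast
qed

lemma alignment_prec_of_lt:
  assumes "alignment I P lt E prec" "Q \<in> components (Sigma I P) E" "Q' \<in> components (Sigma I P) E"
    and "(a, i) \<in> Q" "(a, j) \<in> Q'" "lt a i j"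
  shows "prec Q Q'"
proof -
  have "\<forall>Q\<in>components (Sigma I P) E. \<forall>Q'\<in>components (Sigma I P) E. \<forall>a i j.
      (a, i) \<in> Q \<longrightarrow> (a, j) \<in> Q' \<longrightarrow> lt a i j \<longrightarrow> prec Q Q'"
    using assms(1) by (simp add: alignment_def Let_def)
  then show ?thesis using assms(2-) by blast
qed

lemma alignment_has_maximal_column:
  assumes al: "alignment I P lt E prec" and "finite (Sigma I P)" "components (Sigma I P) E \<noteq> {}"
  shows "\<exists>\<Xi>\<in>components (Sigma I P) E. \<not> (\<exists>Q\<in>components (Sigma I P) E. prec \<Xi> Q)"
proof (rule strict_po_on_finite_has_maximal)
  show "finite (components (Sigma I P) E)"
    using assms(2) by (simp add: components_simple_graph[OF alignment_simple_graph[OF al]])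
  show "strict_po_on (components (Sigma I P) E) prec"
    using al by (simp add: alignment_def Let_def)
qed fact

lemma alignment_remove_column:
  assumes al: "alignment I P lt E prec" and \<Xi>: "\<Xi> \<in> components (Sigma I P) E"
  shows "alignment I (\<lambda>a. P a - {x. (a, x) \<in> \<Xi>}) lt (\<lambda>u v. E u v \<and> u \<notin> \<Xi> \<and> v \<notin> \<Xi>)
           (\<lambda>C D. prec C D \<and> C \<noteq> \<Xi> \<and> D \<noteq> \<Xi>)"
proof -
  let ?C = "components (Sigma I P) E"
  have sg: "simple_graph (Sigma I P) E" and po: "strict_po_on ?C prec"
    and P1: "\<forall>Q\<in>?C. \<forall>u\<in>Q. \<forall>v\<in>Q. u \<noteq> v \<longrightarrow> E u v"
    and P2: "\<forall>Q\<in>?C. \<forall>a i j. (a, i) \<in> Q \<longrightarrow> (a, j) \<in> Q \<longrightarrow> i = j"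
    and P3: "\<forall>Q\<in>?C. \<forall>Q'\<in>?C. \<forall>a i j. (a, i) \<in> Q \<longrightarrow> (a, j) \<in> Q' \<longrightarrow> lt a i j \<longrightarrow> prec Q Q'"
    and P4: "\<forall>Q\<in>?C. \<forall>Q'\<in>?C. \<forall>a i j. prec Q Q' \<longrightarrow> (a, i) \<in> Q \<longrightarrow> (a, j) \<in> Q' \<longrightarrow>
          lt a i j \<or> (\<not> lt a i j \<and> \<not> lt a j i)"
    using al unfolding alignment_def Let_def by auto
  have Sigma_eq: "Sigma I (\<lambda>a. P a - {x. (a, x) \<in> \<Xi>}) = Sigma I P - \<Xi>"
    using Sigma_diff_subset[OF components_subset[OF sg \<Xi>]] by simp
  note rest = components_remove_component[OF sg \<Xi>, folded Sigma_eq]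
  have disj: "Q \<inter> \<Xi> = {}" if "Q \<in> ?C - {\<Xi>}" for Q
    using components_disjoint[OF sg _ \<Xi>] that by blast
  show ?thesis
    unfolding alignment_def Let_def rest(2)
  proof (intro conjI)
    show "strict_po_on (?C - {\<Xi>}) (\<lambda>C D. prec C D \<and> C \<noteq> \<Xi> \<and> D \<noteq> \<Xi>)"
      using po unfolding strict_po_on_def by blast
    show "\<forall>Q\<in>?C - {\<Xi>}. \<forall>u\<in>Q. \<forall>v\<in>Q. u \<noteq> v \<longrightarrow> E u v \<and> u \<notin> \<Xi> \<and> v \<notin> \<Xi>"
    proof (intro ballI impI conjI)
      fix Q u v assume "Q \<in> ?C - {\<Xi>}" "u \<in> Q" "v \<in> Q" "u \<noteq> v"
      then show "E u v" "u \<notin> \<Xi>" "v \<notin> \<Xi>" using P1 disj by blast+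
    qed
    show "\<forall>Q\<in>?C - {\<Xi>}. \<forall>a i j. (a, i) \<in> Q \<longrightarrow> (a, j) \<in> Q \<longrightarrow> i = j"
      using P2 by blast
    show "\<forall>Q\<in>?C - {\<Xi>}. \<forall>Q'\<in>?C - {\<Xi>}. \<forall>a i j. (a, i) \<in> Q \<longrightarrow> (a, j) \<in> Q' \<longrightarrow> lt a i j \<longrightarrow>
        prec Q Q' \<and> Q \<noteq> \<Xi> \<and> Q' \<noteq> \<Xi>"
      using P3 by blast
    show "\<forall>Q\<in>?C - {\<Xi>}. \<forall>Q'\<in>?C - {\<Xi>}. \<forall>a i j. prec Q Q' \<and> Q \<noteq> \<Xi> \<and> Q' \<noteq> \<Xi> \<longrightarrow>
        (a, i) \<in> Q \<longrightarrow> (a, j) \<in> Q' \<longrightarrow> lt a i j \<or> (\<not> lt a i j \<and> \<not> lt a j i)"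
      using P4 by blast
  qed (rule rest(1))
qed

lemma maximal_column_entry_maximal:
  assumes al: "alignment I P lt E prec" and \<Xi>: "\<Xi> \<in> components (Sigma I P) E"
    and max: "\<not> (\<exists>Q\<in>components (Sigma I P) E. prec \<Xi> Q)"
    and a: "a \<in> I" and p: "(a, p) \<in> \<Xi>" and q: "q \<in> P a"
  shows "\<not> lt a p q"
proof
  assume "lt a p q"
  have sg: "simple_graph (Sigma I P) E" using al by (rule alignment_simple_graph)
  let ?Q = "{v \<in> Sigma I P. E\<^sup>*\<^sup>* (a, q) v}"
  have "?Q \<in> components (Sigma I P) E" "(a, q) \<in> ?Q"
    using reachable_in_components[OF sg] a q by auto
  with alignment_prec_of_lt[OF al \<Xi>] p \<open>lt a p q\<close> max show False by blast
qed

lemma maximal_column_row: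
  assumes al: "alignment I P lt E prec" and \<Xi>: "\<Xi> \<in> components (Sigma I P) E"
    and max: "\<not> (\<exists>Q\<in>components (Sigma I P) E. prec \<Xi> Q)" and a: "a \<in> I"
  shows "{x. (a, x) \<in> \<Xi>} = {} \<or> (\<exists>p. {x. (a, x) \<in> \<Xi>} = {p} \<and> p \<in> sup_set (lt a) (P a))"
proof (cases "{x. (a, x) \<in> \<Xi>} = {}")
  case False
  then obtain p where p: "(a, p) \<in> \<Xi>" by auto
  have sg: "simple_graph (Sigma I P) E" using al by (rule alignment_simple_graph)
  have "{x. (a, x) \<in> \<Xi>} = {p}" using alignment_column_row_unique[OF al \<Xi>] p by blast
  moreover have "p \<in> P a" using p components_subset[OF sg \<Xi>] by auto
  ultimately show ?thesis
    using maximal_column_entry_maximal[OF al \<Xi> max a p] by (auto simp: sup_set_def)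
qed simp

lemma bottom_set_remove_maximal_column:
  assumes al: "alignment I P lt E prec" and \<Xi>: "\<Xi> \<in> components (Sigma I P) E"
    and max: "\<not> (\<exists>Q\<in>components (Sigma I P) E. prec \<Xi> Q)"
    and a: "a \<in> I" and bot: "bottom_set (X a) (lt a) (P a)"
  shows "bottom_set (X a) (lt a) (P a - {x. (a, x) \<in> \<Xi>})"
  using bot maximal_column_entry_maximal[OF al \<Xi> max a] unfolding bottom_set_def by blast

theorem theorem1:
  fixes I :: "'i set" and X P :: "'i \<Rightarrow> 'x set" and lt :: "'i \<Rightarrow> 'x \<Rightarrow> 'x \<Rightarrow> bool"
    and E :: "('i \<times> 'x) \<Rightarrow> ('i \<times> 'x) \<Rightarrow> bool"
    and prec :: "('i \<times> 'x) set \<Rightarrow> ('i \<times> 'x) set \<Rightarrow> bool"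
  assumes "finite I"
    and "\<forall>a\<in>I. finite (X a) \<and> strict_po_on (X a) (lt a)"
    and "\<forall>a\<in>I. bottom_set (X a) (lt a) (P a)"
    and "alignment I P lt E prec"
    and "components (Sigma I P) E \<noteq> {}"
  shows "(\<exists>\<Xi>\<in>components (Sigma I P) E. \<not> (\<exists>Q\<in>components (Sigma I P) E. prec \<Xi> Q))
    \<and> (\<forall>\<Xi>\<in>components (Sigma I P) E. \<not> (\<exists>Q\<in>components (Sigma I P) E. prec \<Xi> Q) \<longrightarrow>
        (let P' = (\<lambda>a. P a - {x. (a, x) \<in> \<Xi>});
             E' = (\<lambda>u v. E u v \<and> u \<notin> \<Xi> \<and> v \<notin> \<Xi>);
             prec' = (\<lambda>C D. prec C D \<and> C \<noteq> \<Xi> \<and> D \<noteq> \<Xi>)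
         in
         \<comment> \<open>(1)\<close>
         (\<forall>a\<in>I. {x. (a, x) \<in> \<Xi>} = {} \<or>
                 (\<exists>p. {x. (a, x) \<in> \<Xi>} = {p} \<and> p \<in> sup_set (lt a) (P a))) \<and>
         (\<exists>a\<in>I. {x. (a, x) \<in> \<Xi>} \<noteq> {}) \<and>
         \<comment> \<open>(2)\<close>
         (\<forall>a\<in>I. bottom_set (X a) (lt a) (P' a)) \<and>
         Sigma I P - \<Xi> = Sigma I P' \<and>
         components (Sigma I P') E' = components (Sigma I P) E - {\<Xi>} \<and>
         alignment I P' lt E' prec' \<and>
         \<comment> \<open>(3)\<close>
         (\<forall>\<Upsilon>\<in>components (Sigma I P') E'.
             prec \<Upsilon> \<Xi> \<or> (\<not> prec \<Upsilon> \<Xi> \<and> \<not> prec \<Xi> \<Upsilon>))))"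
    (is "_ \<and> (\<forall>\<Xi>\<in>_. _ \<longrightarrow> ?removal \<Xi>)")
proof (intro conjI ballI impI)
  have "finite (Sigma I P)"
    using assms(1-3) by (auto simp: bottom_set_def intro!: finite_SigmaI intro: finite_subset)
  with assms(4,5) show "\<exists>\<Xi>\<in>components (Sigma I P) E. \<not> (\<exists>Q\<in>components (Sigma I P) E. prec \<Xi> Q)"
    by (intro alignment_has_maximal_column)
next
  fix \<Xi> assume \<Xi>: "\<Xi> \<in> components (Sigma I P) E"
    and max: "\<not> (\<exists>Q\<in>components (Sigma I P) E. prec \<Xi> Q)"
  have sg: "simple_graph (Sigma I P) E" using assms(4) by (rule alignment_simple_graph)
  have \<Xi>_sub: "\<Xi> \<subseteq> Sigma I P" and "\<Xi> \<noteq> {}"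
    using components_subset[OF sg \<Xi>] components_nonempty[OF sg \<Xi>] .
  then have nonempty: "\<exists>a\<in>I. {x. (a, x) \<in> \<Xi>} \<noteq> {}" by fast
  have rows: "\<forall>a\<in>I. {x. (a, x) \<in> \<Xi>} = {} \<or>
      (\<exists>p. {x. (a, x) \<in> \<Xi>} = {p} \<and> p \<in> sup_set (lt a) (P a))"
    using maximal_column_row[OF assms(4) \<Xi> max] by blast
  have bottom: "\<forall>a\<in>I. bottom_set (X a) (lt a) (P a - {x. (a, x) \<in> \<Xi>})"
    using bottom_set_remove_maximal_column[OF assms(4) \<Xi> max] assms(3) by blast
  note Sigma_eq = Sigma_diff_subset[OF \<Xi>_sub]
  note comps = components_remove_component(2)[OF sg \<Xi>, unfolded Sigma_eq]
  have below: "\<forall>\<Upsilon>\<in>components (Sigma I (\<lambda>a. P a - {x. (a, x) \<in> \<Xi>}))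
      (\<lambda>u v. E u v \<and> u \<notin> \<Xi> \<and> v \<notin> \<Xi>). prec \<Upsilon> \<Xi> \<or> (\<not> prec \<Upsilon> \<Xi> \<and> \<not> prec \<Xi> \<Upsilon>)"
    using comps max by auto
  show "?removal \<Xi>"
    unfolding Let_def
    by (intro conjI) (fact rows nonempty bottom Sigma_eq comps below
        alignment_remove_column[OF assms(4) \<Xi>])+
qed

end
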